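(* Let $n\ge 4$, let $\pi$ be a real representation of $S_n$, and let $s_1=(1,2)$, $s_3=(3,4)$. Then the integer $h_\pi=\frac{\chi_\pi(1)-\chi_\pi(s_1s_3)}{2}$ is even.
   Context: $\chi_\pi$ denotes the character of $\pi$. *)

theory Defs
  imports "Jordan_Normal_Form.Matrix" "HOL-Combinatorics.Permutations" "HOL-Combinatorics.Transposition"
begin

definition real_rep :: "nat \<Rightarrow> nat \<Rightarrow> ((nat \<Rightarrow> nat) \<Rightarrow> real mat) \<Rightarrow> bool" where
  "real_rep n d rho \<longleftrightarrow>
     (\<forall>\<sigma>. \<sigma> permutes {1..n} \<longrightarrow> rho \<sigma> \<in> carrier_mat d d) \<and>
     rho id = 1\<^sub>m d \<and>
     (\<forall>\<sigma> \<tau>. \<sigma> permutes {1..n} \<longrightarrow> \<tau> permutes {1..n} \<longrightarrow> rho (\<sigma> \<circ> \<tau>) = rho \<sigma> * rho \<tau>)"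

definition mat_trace :: "real mat \<Rightarrow> real" where
  "mat_trace A = (\<Sum>i<dim_row A. A $$ (i, i))"

definition character :: "((nat \<Rightarrow> nat) \<Rightarrow> real mat) \<Rightarrow> (nat \<Rightarrow> nat) \<Rightarrow> real" where
  "character rho \<sigma> = mat_trace (rho \<sigma>)"

end

theory Submission imports Defs "Jordan_Normal_Form.Schur_Decomposition" begin

text \<open>The double transpositions \<open>g\<^sub>1 = (1 2)(3 4)\<close> and \<open>g\<^sub>2 = (1 3)(2 4)\<close> are commuting
  involutions, so \<open>(1 + \<rho> g\<^sub>1)(1 - \<rho> g\<^sub>2) / 4\<close> is an idempotent matrix. Its trace is a natural
  number \<open>m\<close> (over \<complex> the idempotent is similar to an upper triangular one, whose diagonal
  entries are \<open>0\<close> or \<open>1\<close>), and it equals \<open>(\<chi>(1) + \<chi>(g\<^sub>1) - \<chi>(g\<^sub>2) - \<chi>(g\<^sub>1g\<^sub>2)) / 4\<close>.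
  As \<open>g\<^sub>1\<close>, \<open>g\<^sub>2\<close>, \<open>g\<^sub>1g\<^sub>2\<close> are conjugate in \<open>S\<^sub>n\<close>, this is \<open>(\<chi>(1) - \<chi>(g\<^sub>1)) / 4\<close>, so \<open>h = 2m\<close>.\<close>

text \<open>\<^const>\<open>mat_trace\<close> only covers real matrices; the argument needs complex ones too.\<close>

definition trace :: "'a::comm_ring_1 mat \<Rightarrow> 'a" where
  "trace A = (\<Sum>i<dim_row A. A $$ (i, i))"

lemma mat_trace_eq_trace: "mat_trace A = trace A"
  unfolding mat_trace_def trace_def ..

lemma trace_one [simp]: "trace (1\<^sub>m n) = of_nat n"
  unfolding trace_def by simp

lemma trace_add: "A \<in> carrier_mat n n \<Longrightarrow> B \<in> carrier_mat n n \<Longrightarrow> trace (A + B) = trace A + trace B"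
  unfolding trace_def by (simp add: sum.distrib)

lemma trace_minus: "A \<in> carrier_mat n n \<Longrightarrow> B \<in> carrier_mat n n \<Longrightarrow> trace (A - B) = trace A - trace B"
  unfolding trace_def by (simp add: sum_subtractf)

lemma trace_smult: "A \<in> carrier_mat n n \<Longrightarrow> trace (k \<cdot>\<^sub>m A) = k * trace A"
  unfolding trace_def by (simp add: sum_distrib_left)

lemma trace_map_mat:
  assumes "A \<in> carrier_mat n n"
  shows "trace (map_mat of_real A) = of_real (trace A)"
  using assms unfolding trace_def by simp

lemma trace_mult_comm:
  assumes A: "A \<in> carrier_mat n m" and B: "B \<in> carrier_mat m n"
  shows "trace (A * B) = trace (B * A)"
proof -
  have "trace (A * B) = (\<Sum>i<n. \<Sum>j<m. A $$ (i,j) * B $$ (j,i))"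
    using A B unfolding trace_def
    by (auto simp: scalar_prod_def lessThan_atLeast0 intro!: sum.cong)
  also have "\<dots> = (\<Sum>j<m. \<Sum>i<n. B $$ (j,i) * A $$ (i,j))"
    by (subst sum.swap) (simp add: mult.commute)
  also have "\<dots> = trace (B * A)"
    using A B unfolding trace_def
    by (auto simp: scalar_prod_def lessThan_atLeast0 intro!: sum.cong)
  finally show ?thesis .
qed

lemma trace_similar:
  assumes A: "A \<in> carrier_mat n n" and P: "P \<in> carrier_mat n n" and P': "P' \<in> carrier_mat n n"
    and inverse: "P' * P = 1\<^sub>m n"
  shows "trace (P * A * P') = trace A"
proof -
  have "trace (P * A * P') = trace (P * (A * P'))"
    using A P P' by (simp add: assoc_mult_mat[of _ n n _ n _ n])
  also have "\<dots> = trace (A * P' * P)"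
    using A P P' by (intro trace_mult_comm) auto
  also have "\<dots> = trace A"
    using A P P' inverse by (simp add: assoc_mult_mat[of _ n n _ n _ n])
  finally show ?thesis .
qed

lemma idempotent_upper_triangular_diag:
  fixes B :: "'a::idom mat"
  assumes B: "B \<in> carrier_mat n n" and ut: "upper_triangular B" and idem: "B * B = B"
    and i: "i < n"
  shows "B $$ (i,i) = 0 \<or> B $$ (i,i) = 1"
proof -
  have "(B * B) $$ (i,i) = (\<Sum>k\<in>{0..<n}. B $$ (i,k) * B $$ (k,i))"
    using B i by (simp add: scalar_prod_def)
  also have "\<dots> = (\<Sum>k\<in>{i}. B $$ (i,k) * B $$ (k,i))"
  proof (rule sum.mono_neutral_right)
    show "\<forall>k\<in>{0..<n} - {i}. B $$ (i,k) * B $$ (k,i) = 0"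
      using ut B i unfolding upper_triangular_def by (auto simp: neq_iff)
  qed (use i in auto)
  finally have "B $$ (i,i) * B $$ (i,i) = B $$ (i,i)"
    using idem by simp
  then show ?thesis
    by (metis mult_cancel_right1 mult_zero_left)
qed

lemma idempotent_upper_triangular_trace:
  fixes B :: "'a::idom mat"
  assumes B: "B \<in> carrier_mat n n" and ut: "upper_triangular B" and idem: "B * B = B"
  shows "trace B = of_nat (card {i\<in>{..<n}. B $$ (i,i) = 1})"
proof -
  have "trace B = (\<Sum>i<n. if B $$ (i,i) = 1 then 1 else 0)"
    using B idempotent_upper_triangular_diag[OF B ut idem] unfolding trace_def
    by (intro sum.cong) auto
  then show ?thesis
    by (simp add: sum.If_cases Int_def)
qed

lemma idempotent_trace_complex:
  fixes Q :: "complex mat"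
  assumes Q: "Q \<in> carrier_mat n n" and idem: "Q * Q = Q"
  shows "\<exists>m::nat. trace Q = of_nat m"
proof -
  obtain es where cp: "char_poly Q = (\<Prod>a\<leftarrow>es. [:- a, 1:])"
    using char_poly_factorized[OF Q] by blast
  obtain B P P' where sd: "schur_decomposition Q es = (B,P,P')"
    by (cases "schur_decomposition Q es") auto
  from schur_decomposition[OF Q cp sd] have sim: "similar_mat_wit Q B P P'"
    and ut: "upper_triangular B" by auto
  from similar_mat_witD2[OF Q sim]
  have B: "B \<in> carrier_mat n n" and P: "P \<in> carrier_mat n n" and P': "P' \<in> carrier_mat n n"
    and "P * P' = 1\<^sub>m n" "P' * P = 1\<^sub>m n" "Q = P * B * P'" by auto
  note carriers = B P P' this
  have B_conj: "B = P' * Q * P"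
    using similar_mat_witD2(3)[OF B similar_mat_wit_sym[OF sim]] .
  have "B * B = P' * (Q * Q) * P"
    unfolding B_conj using carriers by (simp add: assoc_mult_mat[of _ n n _ n _ n])
  then have "B * B = B"
    unfolding idem B_conj .
  then have "trace B = of_nat (card {i\<in>{..<n}. B $$ (i,i) = 1})"
    using idempotent_upper_triangular_trace[OF B ut] by blast
  moreover have "trace Q = trace B"
    using carriers trace_similar[OF B P P'] by simp
  ultimately show ?thesis by auto
qed

lemma idempotent_trace_real:
  fixes Q :: "real mat"
  assumes Q: "Q \<in> carrier_mat n n" and idem: "Q * Q = Q"
  shows "\<exists>m::nat. trace Q = real m"
proof -
  let ?C = "map_mat complex_of_real Q"
  have "?C * ?C = ?C"
    using of_real_hom.mat_hom_mult[OF Q Q] idem by metis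
  then obtain m :: nat where "trace ?C = of_nat m"
    using idempotent_trace_complex[of ?C n] Q by auto
  then have "complex_of_real (trace Q) = complex_of_real (real m)"
    using trace_map_mat[OF Q] by (metis of_real_of_nat_eq)
  then show ?thesis
    using of_real_eq_iff by blast
qed

lemma involution_one_plus_square:
  fixes A :: "'a::comm_ring_1 mat"
  assumes A: "A \<in> carrier_mat n n" and invol: "A * A = 1\<^sub>m n"
  shows "(1\<^sub>m n + A) * (1\<^sub>m n + A) = 2 \<cdot>\<^sub>m (1\<^sub>m n + A)"
proof -
  have "(1\<^sub>m n + A) * (1\<^sub>m n + A) = 1\<^sub>m n * (1\<^sub>m n + A) + A * (1\<^sub>m n + A)"
    using A by (intro add_mult_distrib_mat) auto
  also have "A * (1\<^sub>m n + A) = A * 1\<^sub>m n + A * A"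
    using A by (intro mult_add_distrib_mat) auto
  finally show ?thesis
    using A invol by (intro eq_matI) auto
qed

lemma involution_one_minus_square:
  fixes A :: "'a::comm_ring_1 mat"
  assumes A: "A \<in> carrier_mat n n" and invol: "A * A = 1\<^sub>m n"
  shows "(1\<^sub>m n - A) * (1\<^sub>m n - A) = 2 \<cdot>\<^sub>m (1\<^sub>m n - A)"
proof -
  have "(1\<^sub>m n - A) * (1\<^sub>m n - A) = 1\<^sub>m n * (1\<^sub>m n - A) - A * (1\<^sub>m n - A)"
    using A by (intro minus_mult_distrib_mat) auto
  also have "A * (1\<^sub>m n - A) = A * 1\<^sub>m n - A * A"
    using A by (intro mult_minus_distrib_mat) auto
  finally show ?thesis
    using A invol by (intro eq_matI) auto
qed

lemma smult_smult_mat: "a \<cdot>\<^sub>m (b \<cdot>\<^sub>m A) = (a * b :: 'a::semigroup_mult) \<cdot>\<^sub>m A"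
  by (intro eq_matI) (auto simp: mult.assoc)

lemma commuting_scaled_idempotents_mult:
  fixes X Y :: "'a::comm_ring_1 mat"
  assumes X: "X \<in> carrier_mat n n" and Y: "Y \<in> carrier_mat n n"
    and XX: "X * X = a \<cdot>\<^sub>m X" and YY: "Y * Y = b \<cdot>\<^sub>m Y" and comm: "X * Y = Y * X"
  shows "(X * Y) * (X * Y) = (a * b) \<cdot>\<^sub>m (X * Y)"
proof -
  have "(X * Y) * (X * Y) = X * (Y * X) * Y"
    using X Y by (simp add: assoc_mult_mat[of _ n n _ n _ n])
  also have "\<dots> = (X * X) * (Y * Y)"
    unfolding comm[symmetric] using X Y by (simp add: assoc_mult_mat[of _ n n _ n _ n])
  also have "\<dots> = (a * b) \<cdot>\<^sub>m (X * Y)"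
    unfolding XX YY using X Y
    by (simp add: mult_smult_assoc_mat[of _ n n] mult_smult_distrib[of _ n n] smult_smult_mat mult.commute)
  finally show ?thesis .
qed

lemma scaled_idempotent_normalize:
  fixes M :: "'a::field mat"
  assumes M: "M \<in> carrier_mat n n" and MM: "M * M = c \<cdot>\<^sub>m M" and c: "c \<noteq> 0"
  shows "(inverse c \<cdot>\<^sub>m M) * (inverse c \<cdot>\<^sub>m M) = inverse c \<cdot>\<^sub>m M"
  using M c by (simp add: mult_smult_assoc_mat[of _ n n] mult_smult_distrib[of _ n n] MM smult_smult_mat)

lemma commuting_involutions_trace:
  fixes A B :: "real mat"
  assumes A: "A \<in> carrier_mat n n" and B: "B \<in> carrier_mat n n"
    and AA: "A * A = 1\<^sub>m n" and BB: "B * B = 1\<^sub>m n" and comm: "A * B = B * A"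
  shows "\<exists>m::nat. real n + trace A - trace B - trace (A * B) = 4 * real m"
proof -
  define X where "X = 1\<^sub>m n + A"
  define Y where "Y = 1\<^sub>m n - B"
  have X: "X \<in> carrier_mat n n" and Y: "Y \<in> carrier_mat n n"
    unfolding X_def Y_def using A B by auto
  have XY: "X * Y = (1\<^sub>m n - B) + (A - A * B)"
  proof -
    have "X * Y = 1\<^sub>m n * Y + A * Y"
      unfolding X_def using A Y by (intro add_mult_distrib_mat) auto
    also have "A * Y = A * 1\<^sub>m n - A * B"
      unfolding Y_def using A B by (intro mult_minus_distrib_mat) auto
    finally show ?thesis
      unfolding Y_def using A B by simp
  qed
  have "Y * X = (1\<^sub>m n + A) - (B + B * A)"
  proof -
    have "Y * X = 1\<^sub>m n * X - B * X"
      unfolding Y_def using B X by (intro minus_mult_distrib_mat) auto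
    also have "B * X = B * 1\<^sub>m n + B * A"
      unfolding X_def using A B by (intro mult_add_distrib_mat) auto
    finally show ?thesis
      unfolding X_def using A B by simp
  qed
  then have "X * Y = Y * X"
    unfolding XY comm using A B by (intro eq_matI) auto
  moreover have "X * X = 2 \<cdot>\<^sub>m X" "Y * Y = 2 \<cdot>\<^sub>m Y"
    unfolding X_def Y_def using involution_one_plus_square[OF A AA]
      involution_one_minus_square[OF B BB] .
  ultimately have "(X * Y) * (X * Y) = 4 \<cdot>\<^sub>m (X * Y)"
    using commuting_scaled_idempotents_mult[OF X Y] by simp
  then have "(inverse 4 \<cdot>\<^sub>m (X * Y)) * (inverse 4 \<cdot>\<^sub>m (X * Y)) = inverse 4 \<cdot>\<^sub>m (X * Y)"
    using X Y by (intro scaled_idempotent_normalize[of _ n]) auto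
  then obtain m :: nat where "trace (inverse 4 \<cdot>\<^sub>m (X * Y)) = real m"
    using idempotent_trace_real[of _ n] X Y by fastforce
  moreover have "trace (X * Y) = real n + trace A - trace B - trace (A * B)"
    unfolding XY using A B
    by (subst trace_add[of _ n]) (auto simp: trace_minus[of _ n])
  ultimately show ?thesis
    using X Y by (auto simp: trace_smult[of _ n])
qed

lemma real_rep_mult_commute:
  assumes "real_rep n d rho" and "\<sigma> permutes {1..n}" "\<tau> permutes {1..n}"
    and "\<sigma> \<circ> \<tau> = \<tau> \<circ> \<sigma>"
  shows "rho \<sigma> * rho \<tau> = rho \<tau> * rho \<sigma>"
  using assms unfolding real_rep_def by metis

lemma real_rep_involution:
  assumes "real_rep n d rho" and "\<sigma> permutes {1..n}" and "\<sigma> \<circ> \<sigma> = id"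
  shows "rho \<sigma> * rho \<sigma> = 1\<^sub>m d"
  using assms unfolding real_rep_def by metis

lemma character_conjugate:
  assumes rep: "real_rep n d rho" and sigma: "\<sigma> permutes {1..n}" and tau: "\<tau> permutes {1..n}"
  shows "character rho (\<tau> \<circ> \<sigma> \<circ> Hilbert_Choice.inv \<tau>) = character rho \<sigma>"
proof -
  have tau_inv: "Hilbert_Choice.inv \<tau> permutes {1..n}"
    using tau by (rule permutes_inv)
  have carrier: "\<And>p. p permutes {1..n} \<Longrightarrow> rho p \<in> carrier_mat d d"
    and hom: "\<And>p q. p permutes {1..n} \<Longrightarrow> q permutes {1..n} \<Longrightarrow> rho (p \<circ> q) = rho p * rho q"
    using rep unfolding real_rep_def by auto
  have "rho (Hilbert_Choice.inv \<tau>) * rho \<tau> = 1\<^sub>m d"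
    using rep hom[OF tau_inv tau] permutes_inv_o(2)[OF tau] unfolding real_rep_def by simp
  moreover have "rho (\<tau> \<circ> \<sigma> \<circ> Hilbert_Choice.inv \<tau>) = rho \<tau> * rho \<sigma> * rho (Hilbert_Choice.inv \<tau>)"
    using hom sigma tau tau_inv by (simp add: permutes_compose)
  ultimately show ?thesis
    unfolding character_def mat_trace_eq_trace
    using trace_similar[OF carrier[OF sigma] carrier[OF tau] carrier[OF tau_inv]] by simp
qed

theorem lemma3p2:
  fixes n d :: nat and rho :: "(nat \<Rightarrow> nat) \<Rightarrow> real mat"
  assumes "n \<ge> 4"
    and "real_rep n d rho"
  shows "\<exists>k::int. (character rho id - character rho (transpose 1 2 \<circ> transpose 3 4)) / 2
                  = real_of_int (2 * k)"
proof -
  define g1 :: "nat \<Rightarrow> nat" where "g1 = transpose 1 2 \<circ> transpose 3 4"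
  define g2 :: "nat \<Rightarrow> nat" where "g2 = transpose 1 3 \<circ> transpose 2 4"
  have points: "1 \<in> {1..n}" "2 \<in> {1..n}" "3 \<in> {1..n}" "4 \<in> {1..n}"
    using assms(1) by auto
  have perms: "g1 permutes {1..n}" "g2 permutes {1..n}"
    "transpose 2 3 permutes {1..n}" "transpose 2 4 permutes {1..n}"
    unfolding g1_def g2_def by (intro permutes_compose permutes_swap_id points)+
  have identities: "g1 \<circ> g1 = id" "g2 \<circ> g2 = id" "g1 \<circ> g2 = g2 \<circ> g1"
    "g2 = transpose 2 3 \<circ> g1 \<circ> Hilbert_Choice.inv (transpose 2 3)"
    "g1 \<circ> g2 = transpose 2 4 \<circ> g1 \<circ> Hilbert_Choice.inv (transpose 2 4)"
    unfolding g1_def g2_def by (auto simp: fun_eq_iff transpose_def)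
  have rho: "rho g1 \<in> carrier_mat d d" "rho g2 \<in> carrier_mat d d" "rho id = 1\<^sub>m d"
    "rho (g1 \<circ> g2) = rho g1 * rho g2"
    using assms(2) perms unfolding real_rep_def by auto
  obtain m :: nat where "real d + trace (rho g1) - trace (rho g2) - trace (rho g1 * rho g2) = 4 * real m"
    using commuting_involutions_trace[OF rho(1,2)] identities perms assms(2)
      real_rep_involution real_rep_mult_commute by metis
  moreover have "trace (rho g2) = trace (rho g1)" "trace (rho g1 * rho g2) = trace (rho g1)"
    using character_conjugate[OF assms(2) perms(1)] perms identities rho(4)
    unfolding character_def mat_trace_eq_trace by metis+
  ultimately have "character rho id - character rho g1 = 4 * real m"
    unfolding character_def mat_trace_eq_trace rho(3) by simp
  then show ?thesis
    unfolding g1_def by (intro exI[of _ "int m"]) simp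
qed

end
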